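(* (1) For $[P]\in G(3,V)$ (a plane in $\mathbb P^6$), the subspace $L^2_P:=\{Q\in H^0(\mathcal O_{\mathbb P^6}(2)):P\subset\{Q=0\}\}$ has codimension $6$ in $H^0(\mathcal O_{\mathbb P^6}(2))$. For planes $P\neq P'$, the subspace $L^2_{P,P'}:=\{Q\in H^0(\mathcal O_{\mathbb P^6}(2)):P\cup P'\subset\{Q=0\}\}$ has codimension $6$ in $L^2_P$ if $P\cap P'=\emptyset$, codimension $5$ if $P\cap P'$ is a point, and codimension $3$ if $P\cap P'$ is a line. (2) Let $X\subset\mathbb P^6$ be a smooth cubic $5$-fold with $F_2(X)$ a smooth surface. For $[P]\neq[P']\in F_2(X)$ with $P\cap P'$ a line, $\dim(J_{X,2}\cap L^2_{P,P'})\ge1$, and if $X$ is general, $\dim(J_{X,2}\cap L^2_{P,P'})\ge2$. Consequently $(J_{X,2}\cap L^2_P)+L^2_{P,P'}\subsetneq L^2_P$, and for $X$ general this subspace has codimension at least $2$ in $L^2_P$.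
   Context: $H^0(\mathcal O_{\mathbb P^6}(2))$ is the space of quadratic forms in the coordinates $X_0,\dots,X_6$ of $\mathbb P^6$. For a cubic $X=\{\mathrm{eq}_X=0\}$, $J_{X,2}\subset H^0(\mathcal O_{\mathbb P^6}(2))$ is the degree $2$ part of the Jacobian ideal, spanned by the partial derivatives $\partial\mathrm{eq}_X/\partial X_i$, $i=0,\dots,6$. $F_2(X)$ is the variety of planes contained in $X$. (For $[P]\in F_2(X)$ smooth point, $\dim(J_{X,2}\cap L^2_P)=3$.) *)

theory Defs
  imports "HOL-Analysis.Analysis" "HOL-Library.Function_Algebras"
begin

text \<open>Ambient space V = C^7, so that P^6 = P(V). Planes in P^6 = 3-dimensional
  complex linear subspaces of V (the Grassmannian G(3,V)).\<close>

type_synonym vec7 = "complex ^ 7"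

definition is_plane :: "vec7 set \<Rightarrow> bool" where
  "is_plane W \<longleftrightarrow> vec.subspace W \<and> vec.dim W = 3"

definition fscale :: "complex \<Rightarrow> (vec7 \<Rightarrow> complex) \<Rightarrow> (vec7 \<Rightarrow> complex)" where
  "fscale c q = (\<lambda>x. c * q x)"

abbreviation fdim :: "(vec7 \<Rightarrow> complex) set \<Rightarrow> nat" where
  "fdim \<equiv> vector_space.dim fscale"

abbreviation fspan :: "(vec7 \<Rightarrow> complex) set \<Rightarrow> (vec7 \<Rightarrow> complex) set" where
  "fspan \<equiv> module.span fscale"

definition hscale :: "complex \<Rightarrow> (vec7 \<Rightarrow> vec7) \<Rightarrow> (vec7 \<Rightarrow> vec7)" where
  "hscale c \<phi> = (\<lambda>x. c *s \<phi> x)"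

abbreviation hdim :: "(vec7 \<Rightarrow> vec7) set \<Rightarrow> nat" where
  "hdim \<equiv> vector_space.dim hscale"

text \<open>H^0(O_{P^6}(2)): quadratic forms in X_0..X_6, identified with the
  polynomial functions they define on V (faithful over the infinite field C).\<close>

definition quad_forms :: "(vec7 \<Rightarrow> complex) set" where
  "quad_forms = {q. \<exists>A :: 7 \<Rightarrow> 7 \<Rightarrow> complex.
       \<forall>x. q x = (\<Sum>i\<in>UNIV. \<Sum>j\<in>UNIV. A i j * x$i * x$j)}"

definition L2 :: "vec7 set \<Rightarrow> (vec7 \<Rightarrow> complex) set" where
  "L2 W = {q \<in> quad_forms. \<forall>x\<in>W. q x = 0}"

definition L2pair :: "vec7 set \<Rightarrow> vec7 set \<Rightarrow> (vec7 \<Rightarrow> complex) set" where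
  "L2pair W W' = {q \<in> quad_forms. \<forall>x\<in>W \<union> W'. q x = 0}"

definition sum_sp :: "(vec7 \<Rightarrow> complex) set \<Rightarrow> (vec7 \<Rightarrow> complex) set \<Rightarrow> (vec7 \<Rightarrow> complex) set" where
  "sum_sp A B = {a + b | a b. a \<in> A \<and> b \<in> B}"

text \<open>Cubic forms given by a coefficient tensor c (all 343 coefficients;
  every cubic form arises this way).\<close>

definition cubic_of :: "(7 \<Rightarrow> 7 \<Rightarrow> 7 \<Rightarrow> complex) \<Rightarrow> vec7 \<Rightarrow> complex" where
  "cubic_of c = (\<lambda>x. \<Sum>i\<in>UNIV. \<Sum>j\<in>UNIV. \<Sum>k\<in>UNIV. c i j k * x$i * x$j * x$k)"

definition pd :: "7 \<Rightarrow> (vec7 \<Rightarrow> complex) \<Rightarrow> vec7 \<Rightarrow> complex" where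
  "pd i f x = deriv (\<lambda>t. f (x + t *s axis i 1)) 0"

definition J2 :: "(vec7 \<Rightarrow> complex) \<Rightarrow> (vec7 \<Rightarrow> complex) set" where
  "J2 f = fspan (range (\<lambda>i. pd i f))"

text \<open>Smooth cubic hypersurface (Jacobian criterion): the partials have no
  common zero in P^6.\<close>

definition smooth_hyp :: "(vec7 \<Rightarrow> complex) \<Rightarrow> bool" where
  "smooth_hyp f \<longleftrightarrow> (\<forall>x. (\<forall>i. pd i f x = 0) \<longrightarrow> x = 0)"

definition F2 :: "(vec7 \<Rightarrow> complex) \<Rightarrow> vec7 set set" where
  "F2 f = {W. is_plane W \<and> (\<forall>x\<in>W. f x = 0)}"

text \<open>Hom(W,V), realised as maps that are linear on W and zero off W.\<close>

definition hom_on :: "vec7 set \<Rightarrow> (vec7 \<Rightarrow> vec7) set" where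
  "hom_on W = {\<phi>. (\<forall>x\<in>W. \<forall>y\<in>W. \<phi> (x + y) = \<phi> x + \<phi> y)
                 \<and> (\<forall>c. \<forall>x\<in>W. \<phi> (c *s x) = c *s \<phi> x)
                 \<and> (\<forall>x. x \<notin> W \<longrightarrow> \<phi> x = 0)}"

text \<open>Zariski tangent space of F_2(X) at [P]=[W]:
  T = ker (Hom(W,V/W) \<rightarrow> H^0(O_P(3))), phi |-> (w |-> df_w(phi w)).
  We compute its dimension as dim{phi in Hom(W,V) : df_w(phi w)=0 on W}
  minus dim Hom(W,W) = 9.\<close>

definition tan_lift :: "(vec7 \<Rightarrow> complex) \<Rightarrow> vec7 set \<Rightarrow> (vec7 \<Rightarrow> vec7) set" where
  "tan_lift f W = {\<phi> \<in> hom_on W. \<forall>w\<in>W. deriv (\<lambda>t. f (w + t *s \<phi> w)) 0 = 0}"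

definition F2_tangent_dim :: "(vec7 \<Rightarrow> complex) \<Rightarrow> vec7 set \<Rightarrow> nat" where
  "F2_tangent_dim f W = hdim (tan_lift f W) - 9"

text \<open>F_2(X) is a smooth surface: nonempty and its Zariski tangent space is
  2-dimensional at every point (every component has dimension \<ge> 2 = expected
  dimension, so this is equivalent to being smooth of pure dimension 2).\<close>

definition F2_smooth_surface :: "(vec7 \<Rightarrow> complex) \<Rightarrow> bool" where
  "F2_smooth_surface f \<longleftrightarrow> F2 f \<noteq> {} \<and> (\<forall>W\<in>F2 f. F2_tangent_dim f W = 2)"

text \<open>Polynomial functions on the coefficient space of cubics, for the
  Zariski topology ("X general").\<close>

inductive poly_fun :: "((7 \<Rightarrow> 7 \<Rightarrow> 7 \<Rightarrow> complex) \<Rightarrow> complex) \<Rightarrow> bool" where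
  pf_const: "poly_fun (\<lambda>c. a)"
| pf_coord: "poly_fun (\<lambda>c. c i j k)"
| pf_add: "poly_fun p \<Longrightarrow> poly_fun q \<Longrightarrow> poly_fun (\<lambda>c. p c + q c)"
| pf_mult: "poly_fun p \<Longrightarrow> poly_fun q \<Longrightarrow> poly_fun (\<lambda>c. p c * q c)"

end

theory Submission
  imports Defs
begin

text \<open>
  Choose a basis b_0, \<dots>, b_6 of V adapted to the two planes: P = \<langle>b_0, b_1, b_2\<rangle> and
  P' = \<langle>b_0, \<dots>, b_{k-1}, b_3, \<dots>, b_{5-k}\<rangle>, where k = dim (P \<inter> P'). In the dual
  coordinates a quadric vanishes on a union of coordinate subspaces iff it only involves
  monomials X_i X_j with {i, j} contained in none of them; counting these monomials gives the
  dimensions 28, 22 and 16, 17, 19.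

  For the Jacobian part let \<partial>_v f be the derivative of the cubic equation f along v \<in> V.
  It lies in J_{X,2}, depends linearly and, X being smooth, injectively on v, and it vanishes
  on every plane of X through v; so the \<partial>_v f with v \<in> P \<inter> P' span a plane inside
  J_{X,2} \<inter> L^2_{P,P'}. Conversely, if \<partial>_v f vanished on P for some v \<notin> P, the maps
  w \<mapsto> l(w) u, with l one of the three coordinates on P and u one of b_0, b_1, b_2, v, would be
  12 independent first-order deformations of P in X, whereas dim T_{[P]} F_2(X) = 2 makes the
  space of such lifts (which contains Hom(P, P)) 11-dimensional. Hence
  J_{X,2} \<inter> L^2_P = {\<partial>_v f | v \<in> P}, and (J_{X,2} \<inter> L^2_P) + L^2_{P,P'} is spanned by the
  19-dimensional L^2_{P,P'} and a single \<partial>_w f, so it has codimension at least 2 in the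
  22-dimensional L^2_P. These bounds hold for every smooth X with F_2(X) a smooth surface, so no
  genericity condition is needed.
\<close>

interpretation fv: vector_space fscale
  by unfold_locales (auto simp: fscale_def fun_eq_iff algebra_simps)

interpretation hv: vector_space hscale
  by unfold_locales
    (auto simp: hscale_def fun_eq_iff algebra_simps scalar_mult_eq_scaleR
      vector_space_over_itself.scale_right_distrib)

lemma fscale_apply [simp]: "fscale c q x = c * q x"
  by (simp add: fscale_def)

lemma hscale_apply [simp]: "hscale c \<phi> x = c *s \<phi> x"
  by (simp add: hscale_def)

lemma sum_fun_apply: "(\<Sum>p\<in>S. g p) x = (\<Sum>p\<in>S. g p x)"
  by (induction S rule: infinite_finite_induct) auto


section \<open>Linear algebra\<close>

context vector_space
begin

lemma independent_image_if_relations_trivial: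
  assumes fin: "finite S"
    and trivial: "\<And>a. (\<Sum>p\<in>S. scale (a p) (\<psi> p)) = 0 \<Longrightarrow> \<forall>p\<in>S. a p = 0"
  shows "inj_on \<psi> S" "independent (\<psi> ` S)"
proof -
  show inj: "inj_on \<psi> S"
  proof (rule inj_onI, rule ccontr)
    fix p q assume pq: "p \<in> S" "q \<in> S" "\<psi> p = \<psi> q" "p \<noteq> q"
    define a where "a r = (if r = p then (1::'a) else if r = q then -1 else 0)" for r
    have "(\<Sum>r\<in>S. scale (a r) (\<psi> r)) = (\<Sum>r\<in>{p,q}. scale (a r) (\<psi> r))"
      by (rule sum.mono_neutral_right) (use fin pq in \<open>auto simp: a_def\<close>)
    also have "\<dots> = 0" using pq by (simp add: a_def)
    finally have "a p = 0" using trivial pq by blast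
    then show False by (simp add: a_def)
  qed
  show "independent (\<psi> ` S)"
    unfolding independent_explicit_module
  proof (intro allI impI)
    fix t u v assume t: "finite t" "t \<subseteq> \<psi> ` S" and zero: "(\<Sum>v\<in>t. scale (u v) v) = 0"
      and v: "v \<in> t"
    define S' where "S' = {r \<in> S. \<psi> r \<in> t}"
    define a where "a r = (if \<psi> r \<in> t then u (\<psi> r) else 0)" for r
    have tS: "t = \<psi> ` S'" using t S'_def by auto
    have inj': "inj_on \<psi> S'" using inj_on_subset[OF inj] S'_def by auto
    have "(\<Sum>p\<in>S. scale (a p) (\<psi> p)) = (\<Sum>p\<in>S'. scale (u (\<psi> p)) (\<psi> p))"
      by (rule sum.mono_neutral_cong_right) (use fin in \<open>auto simp: a_def S'_def\<close>)
    also have "\<dots> = (\<Sum>v\<in>t. scale (u v) v)"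
      unfolding tS by (simp add: sum.reindex[OF inj'])
    finally have "\<forall>p\<in>S. a p = 0" using trivial zero by simp
    moreover obtain p where "p \<in> S'" "v = \<psi> p" using v tS by auto
    ultimately show "u v = 0" by (auto simp: a_def S'_def)
  qed
qed

lemma coefficient_zero_if_independent:
  assumes "independent (u ` T)" "inj_on u T" "finite T" "(\<Sum>j\<in>T. scale (a j) (u j)) = 0" "j \<in> T"
  shows "a j = 0"
proof -
  define a' where "a' w = a (the_inv_into T u w)" for w
  have "(\<Sum>w\<in>u ` T. scale (a' w) w) = (\<Sum>j\<in>T. scale (a j) (u j))"
    using assms(2) by (simp add: sum.reindex a'_def the_inv_into_f_f)
  then have "a' (u j) = 0"
    using independentD[OF assms(1), of "u ` T" a' "u j"] assms(3-5) by auto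
  then show ?thesis using assms(2,5) by (simp add: a'_def the_inv_into_f_f)
qed

lemma finite_basis_if_finite_span:
  assumes "V \<subseteq> span F" "finite F"
  obtains B where "B \<subseteq> V" "independent B" "V \<subseteq> span B" "card B = dim V" "finite B"
proof -
  obtain B where B: "B \<subseteq> V" "independent B" "V \<subseteq> span B" "card B = dim V"
    using basis_exists by blast
  moreover have "finite B"
    using independent_span_bound[OF assms(2) B(2)] B(1) assms(1) by blast
  ultimately show thesis using that by blast
qed

lemma dim_mono_finite_span:
  assumes "A \<subseteq> B" "B \<subseteq> span F" "finite F"
  shows "dim A \<le> dim B"
proof -
  obtain C where C: "B \<subseteq> span C" "card C = dim B" "finite C"
    using finite_basis_if_finite_span[OF assms(2,3)] by metis
  obtain D where D: "D \<subseteq> A" "independent D" "card D = dim A"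
    using basis_exists by metis
  show ?thesis using independent_span_bound[OF C(3) D(2)] C D assms(1) by auto
qed

lemma dim_insert_le_finite_span:
  assumes "B \<subseteq> span F" "finite F"
  shows "dim (insert x B) \<le> dim B + 1"
proof -
  obtain C where C: "B \<subseteq> span C" "card C = dim B" "finite C"
    using finite_basis_if_finite_span[OF assms] by metis
  have "insert x B \<subseteq> span (insert x C)"
    using C(1) span_mono[of C "insert x C"] span_base[of x "insert x C"] by blast
  then have "dim (insert x B) \<le> card (insert x C)" using C(3) by (simp add: dim_le_card)
  also have "\<dots> \<le> dim B + 1" using C(2,3) by (simp add: card_insert_if)
  finally show ?thesis .
qed

lemma Un_subset_sums:
  assumes "subspace S" "subspace T"
  shows "S \<union> T \<subseteq> {x + y |x y. x \<in> S \<and> y \<in> T}"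
proof
  fix u assume "u \<in> S \<union> T"
  then have "u = u + 0 \<and> u \<in> S \<and> 0 \<in> T \<or> u = 0 + u \<and> 0 \<in> S \<and> u \<in> T"
    using subspace_0[OF assms(1)] subspace_0[OF assms(2)] by auto
  then show "u \<in> {x + y |x y. x \<in> S \<and> y \<in> T}" by blast
qed

lemma sums_subset_span_Un:
  assumes "S \<subseteq> span B" "T \<subseteq> span C"
  shows "{x + y |x y. x \<in> S \<and> y \<in> T} \<subseteq> span (B \<union> C)"
proof clarify
  fix x y assume "x \<in> S" "y \<in> T"
  then have "x \<in> span (B \<union> C)" "y \<in> span (B \<union> C)"
    using assms span_mono[of B "B \<union> C"] span_mono[of C "B \<union> C"] by auto
  then show "x + y \<in> span (B \<union> C)" by (rule span_add)
qed

end


section \<open>Quadrics in adapted coordinates\<close>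

lemma quad_forms_zero: "0 \<in> quad_forms"
  unfolding quad_forms_def by (intro CollectI exI[of _ "\<lambda>i j. 0"]) simp

lemma quad_forms_add:
  assumes "q \<in> quad_forms" "r \<in> quad_forms"
  shows "q + r \<in> quad_forms"
proof -
  obtain A B where "\<And>x. q x = (\<Sum>i\<in>UNIV. \<Sum>j\<in>UNIV. A i j * x$i * x$j)"
    "\<And>x. r x = (\<Sum>i\<in>UNIV. \<Sum>j\<in>UNIV. B i j * x$i * x$j)"
    using assms unfolding quad_forms_def by blast
  then show ?thesis
    unfolding quad_forms_def
    by (intro CollectI exI[of _ "\<lambda>i j. A i j + B i j"]) (simp add: algebra_simps sum.distrib)
qed

lemma quad_forms_scale:
  assumes "q \<in> quad_forms"
  shows "fscale c q \<in> quad_forms"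
proof -
  obtain A where "\<And>x. q x = (\<Sum>i\<in>UNIV. \<Sum>j\<in>UNIV. A i j * x$i * x$j)"
    using assms unfolding quad_forms_def by blast
  then show ?thesis
    unfolding quad_forms_def
    by (intro CollectI exI[of _ "\<lambda>i j. c * A i j"]) (simp add: algebra_simps sum_distrib_left)
qed

lemma subspace_vanishing_quadrics: "fv.subspace {q \<in> quad_forms. \<forall>x\<in>Z. q x = 0}"
  unfolding fv.subspace_def using quad_forms_zero quad_forms_add quad_forms_scale by auto

lemma fspan_scale_mem: "c = 0 \<or> g \<in> G \<Longrightarrow> fscale c g \<in> fspan G"
proof (cases "c = 0")
  case True
  then have "fscale c g = 0" by (simp add: fun_eq_iff)
  then show ?thesis by (metis fv.span_zero)
qed (auto intro: fv.span_scale fv.span_base)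

lemma fspan_lincomb:
  assumes "finite S" "\<And>p. p \<in> S \<Longrightarrow> c p \<noteq> 0 \<Longrightarrow> g p \<in> G"
  shows "(\<lambda>x. \<Sum>p\<in>S. c p * g p x) \<in> fspan G"
proof -
  have "(\<lambda>x. \<Sum>p\<in>S. c p * g p x) = (\<Sum>p\<in>S. fscale (c p) (g p))"
    by (simp add: fun_eq_iff sum_fun_apply)
  also have "\<dots> \<in> fspan G"
    using assms by (intro fv.span_sum fspan_scale_mem) auto
  finally show ?thesis .
qed

lemma quad_forms_in_finite_span:
  obtains F where "finite F" "quad_forms \<subseteq> fspan F"
proof
  let ?F = "(\<lambda>(i, j) (x::vec7). x$i * x$j) ` UNIV"
  show "finite ?F" by simp
  show "quad_forms \<subseteq> fspan ?F"
  proof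
    fix q assume "q \<in> quad_forms"
    then obtain A where A: "\<And>x. q x = (\<Sum>i\<in>UNIV. \<Sum>j\<in>UNIV. A i j * x$i * x$j)"
      unfolding quad_forms_def by blast
    have "q = (\<lambda>x. \<Sum>p\<in>UNIV. case_prod A p * (\<lambda>(i, j) (x::vec7). x$i * x$j) p x)"
      by (simp add: fun_eq_iff A sum.cartesian_product split_beta mult.assoc flip: UNIV_Times_UNIV)
    also have "\<dots> \<in> fspan ?F"
      by (rule fspan_lincomb) auto
    finally show "q \<in> fspan ?F" .
  qed
qed

definition ordered_pairs :: "(nat \<times> nat) list" where
  "ordered_pairs = [(i, j). j \<leftarrow> [0..<7], i \<leftarrow> [0..<Suc j]]"

lemma mem_ordered_pairs: "p \<in> set ordered_pairs \<longleftrightarrow> fst p \<le> snd p \<and> snd p < 7"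
proof (cases p)
  case (Pair i j)
  show ?thesis
    unfolding ordered_pairs_def Pair by (auto intro!: bexI[of _ j])
qed

text \<open>Index pairs of the monomials \<open>X\<^sub>iX\<^sub>j\<close> vanishing on all the coordinate subspaces
  \<open>span (b ` I)\<close>, \<open>I \<in> II\<close>; \<open>ordered_pairs\<close> is a list so that simp can count them.\<close>

definition free_pairs :: "nat set set \<Rightarrow> (nat \<times> nat) set" where
  "free_pairs II = {p \<in> set ordered_pairs. \<forall>I\<in>II. \<not> (fst p \<in> I \<and> snd p \<in> I)}"

lemma free_pairs_subset: "free_pairs II \<subseteq> set ordered_pairs"
  by (auto simp: free_pairs_def)

lemma card_free_pairs:
  "card (free_pairs {}) = 28"
  "card (free_pairs {{0..<3}}) = 22"
  "card (free_pairs {{0..<3}, {0..<0} \<union> {3..<6}}) = 16"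
  "card (free_pairs {{0..<3}, {0..<1} \<union> {3..<5}}) = 17"
  "card (free_pairs {{0..<3}, {0..<2} \<union> {3..<4}}) = 19"
  unfolding free_pairs_def ordered_pairs_def set_filter[symmetric] by (simp_all add: upt_rec)

lemma sum_diagonal_split:
  fixes f :: "nat \<Rightarrow> nat \<Rightarrow> 'a::comm_monoid_add"
  shows "(\<Sum>k<n. \<Sum>l<n. f k l) = (\<Sum>k<n. f k k) + (\<Sum>l<n. \<Sum>k<l. f k l + f l k)"
  by (induction n) (simp_all add: sum.distrib algebra_simps)

lemma sum_sum_delta:
  assumes "k < (n::nat)" "m < n"
  shows "(\<Sum>k'<n. \<Sum>l<n. if k' = k \<and> l = m then c k' l else 0) = (c k m :: 'a::comm_monoid_add)"
proof -
  have "(\<Sum>k'<n. \<Sum>l<n. if k' = k \<and> l = m then c k' l else 0)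
      = (\<Sum>k'<n. if k' = k then (\<Sum>l<n. if l = m then c k l else 0) else 0)"
    by (intro sum.cong) auto
  then show ?thesis using assms by (simp add: sum.delta)
qed

locale frame =
  fixes b :: "nat \<Rightarrow> vec7"
  assumes inj_b: "inj_on b {0..<7}" and independent_b: "vec.independent (b ` {0..<7})"
begin

lemma span_frame: "vec.span (b ` {0..<7}) = UNIV"
proof -
  have "card (b ` {0..<7}) = 7" using inj_b by (simp add: card_image)
  moreover have "vec.dim (UNIV::vec7 set) = 7" by (simp add: card_cart_basis)
  ultimately show ?thesis using vec.card_eq_dim[of "b ` {0..<7}" UNIV] independent_b by auto
qed

definition coord :: "nat \<Rightarrow> vec7 \<Rightarrow> complex" where
  "coord i x = vec.representation (b ` {0..<7}) x (b i)"

lemma coord_add: "coord i (x + y) = coord i x + coord i y"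
  unfolding coord_def using vec.representation_add[OF independent_b] span_frame by auto

lemma coord_scale: "coord i (c *s x) = c * coord i x"
  unfolding coord_def using vec.representation_scale[OF independent_b] span_frame by auto

lemma coord_zero: "coord i 0 = 0"
  unfolding coord_def by (simp add: vec.representation_zero)

lemma coord_sum: "coord i (sum f S) = (\<Sum>s\<in>S. coord i (f s))"
  by (induction S rule: infinite_finite_induct) (auto simp: coord_add coord_zero)

lemma coord_frame: "i < 7 \<Longrightarrow> j < 7 \<Longrightarrow> coord i (b j) = (if i = j then 1 else 0)"
  unfolding coord_def using vec.representation_basis[OF independent_b, of "b j"] inj_b
  by (auto simp: inj_on_def)

lemma frame_expansion: "x = (\<Sum>i<7. coord i x *s b i)"
proof -
  have "x = (\<Sum>v\<in>b ` {0..<7}. vec.representation (b ` {0..<7}) x v *s v)"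
    using vec.sum_representation_eq[OF independent_b, of x "b ` {0..<7}"] span_frame by auto
  also have "\<dots> = (\<Sum>i\<in>{0..<7}. coord i x *s b i)"
    unfolding coord_def by (subst sum.reindex[OF inj_b]) simp
  finally show ?thesis by (simp add: atLeast0LessThan)
qed

lemma coord_linear_form: "coord i x = (\<Sum>j\<in>UNIV. x $ j * coord i (axis j 1))"
proof -
  have "coord i x = coord i (\<Sum>j\<in>UNIV. x $ j *s axis j 1)" by (simp add: basis_expansion)
  then show ?thesis by (simp add: coord_sum coord_scale)
qed

lemma coord_eq_0_on_span:
  assumes "z \<in> vec.span (b ` I)" "I \<subseteq> {0..<7}" "i < 7" "i \<notin> I"
  shows "coord i z = 0"
  using assms(1)
proof (induction rule: vec.span_induct_alt)
  case base
  then show ?case by (simp add: coord_zero)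
next
  case (step c x y)
  then obtain j where "j \<in> I" "x = b j" by auto
  moreover have "j < 7" using \<open>j \<in> I\<close> assms(2) by auto
  ultimately show ?case using step assms by (auto simp: coord_add coord_scale coord_frame)
qed

definition monomial :: "nat \<Rightarrow> nat \<Rightarrow> vec7 \<Rightarrow> complex" where
  "monomial i j x = coord i x * coord j x"

lemma monomial_swap: "monomial j i = monomial i j"
  by (simp add: monomial_def fun_eq_iff mult.commute)

lemma monomial_in_quad_forms: "monomial i j \<in> quad_forms"
  unfolding quad_forms_def monomial_def
  by (intro CollectI exI[of _ "\<lambda>k l. coord i (axis k 1) * coord j (axis l 1)"] allI,
      subst (1 2) coord_linear_form) (simp add: sum_product mult_ac)

lemma quad_forms_expansion:
  assumes "q \<in> quad_forms"
  obtains B where "\<And>x. q x = (\<Sum>k<7. \<Sum>l<7. B k l * monomial k l x)"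
proof -
  obtain A where A: "\<And>x. q x = (\<Sum>i\<in>UNIV. \<Sum>j\<in>UNIV. A i j * x$i * x$j)"
    using assms unfolding quad_forms_def by auto
  have component: "x $ i = (\<Sum>k<7. coord k x * b k $ i)" for x i
    using arg_cong[OF frame_expansion[of x], of "\<lambda>y. y $ i"] by (simp add: sum_component)
  define B where "B k l = (\<Sum>i\<in>UNIV. \<Sum>j\<in>UNIV. A i j * b k $ i * b l $ j)" for k l
  have "q x = (\<Sum>k<7. \<Sum>l<7. B k l * monomial k l x)" for x
  proof -
    have "q x = (\<Sum>i\<in>UNIV. \<Sum>j\<in>UNIV. \<Sum>k<7. \<Sum>l<7.
                   A i j * b k $ i * b l $ j * (coord k x * coord l x))"
      unfolding A by (subst (1 2) component) (simp add: sum_distrib_left sum_distrib_right mult_ac)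
    also have "\<dots> = (\<Sum>k<7. \<Sum>l<7. \<Sum>i\<in>UNIV. \<Sum>j\<in>UNIV.
                   A i j * b k $ i * b l $ j * (coord k x * coord l x))"
      by (subst sum.swap, subst (2) sum.swap, rule sum.cong[OF refl],
          subst sum.swap, rule sum.cong[OF refl], rule sum.swap)
    also have "\<dots> = (\<Sum>k<7. \<Sum>l<7. B k l * monomial k l x)"
      by (simp add: B_def monomial_def sum_distrib_right)
    finally show ?thesis .
  qed
  then show thesis using that by blast
qed

lemma monomial_at_frame:
  "i < 7 \<Longrightarrow> j < 7 \<Longrightarrow> k < 7 \<Longrightarrow> monomial i j (b k) = (if i = k \<and> j = k then 1 else 0)"
  by (simp add: monomial_def coord_frame)

lemma monomial_at_frame_sum:
  "i < 7 \<Longrightarrow> j < 7 \<Longrightarrow> k < 7 \<Longrightarrow> l < 7 \<Longrightarrow> monomial i j (b k + b l) =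
     ((if i = k then 1 else 0) + (if i = l then 1 else 0)) * ((if j = k then 1 else 0) + (if j = l then 1 else 0))"
  by (simp add: monomial_def coord_add coord_frame)

lemma lincomb_monomials_at_frame:
  assumes "S \<subseteq> set ordered_pairs" "k < 7"
  shows "(\<Sum>p\<in>S. a p * case_prod monomial p (b k)) = (if (k, k) \<in> S then a (k, k) else 0)"
proof -
  have "(\<Sum>p\<in>S. a p * case_prod monomial p (b k)) = (\<Sum>p\<in>S. if p = (k, k) then a p else 0)"
  proof (rule sum.cong[OF refl])
    fix p assume "p \<in> S"
    then have "fst p < 7" "snd p < 7" using assms(1) by (auto simp: mem_ordered_pairs)
    then show "a p * case_prod monomial p (b k) = (if p = (k, k) then a p else 0)"
      using assms by (cases p) (auto simp: monomial_at_frame)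
  qed
  also have "\<dots> = (if (k, k) \<in> S then a (k, k) else 0)"
    using finite_subset[OF assms(1)] by (simp add: sum.delta')
  finally show ?thesis .
qed

lemma lincomb_monomials_at_frame_sum:
  assumes "S \<subseteq> set ordered_pairs" "k < l" "l < 7"
  shows "(\<Sum>p\<in>S. a p * case_prod monomial p (b k + b l)) =
     (if (k, k) \<in> S then a (k, k) else 0) + (if (l, l) \<in> S then a (l, l) else 0)
       + (if (k, l) \<in> S then a (k, l) else 0)"
proof -
  have "(\<Sum>p\<in>S. a p * case_prod monomial p (b k + b l)) = (\<Sum>p\<in>S.
      (if p = (k, k) then a p else 0) + (if p = (l, l) then a p else 0) + (if p = (k, l) then a p else 0))"
  proof (rule sum.cong[OF refl])
    fix p assume "p \<in> S"
    then have "fst p < 7" "snd p < 7" "fst p \<le> snd p" using assms(1) by (auto simp: mem_ordered_pairs)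
    then show "a p * case_prod monomial p (b k + b l) =
      (if p = (k, k) then a p else 0) + (if p = (l, l) then a p else 0) + (if p = (k, l) then a p else 0)"
      using assms by (cases p) (auto simp: monomial_at_frame_sum)
  qed
  then show ?thesis using finite_subset[OF assms(1)] by (simp add: sum.distrib sum.delta')
qed

text \<open>Evaluating at the \<open>b\<^sub>k\<close> isolates the square terms, then evaluating at the \<open>b\<^sub>k + b\<^sub>l\<close>
  isolates the mixed ones.\<close>

lemma lincomb_monomials_eq_0_imp:
  assumes S: "S \<subseteq> set ordered_pairs" and zero: "\<And>x. (\<Sum>p\<in>S. a p * case_prod monomial p x) = 0"
    and p: "p \<in> S"
  shows "a p = 0"
proof -
  obtain k l where kl: "p = (k, l)" "k \<le> l" "l < 7"
    using S p by (cases p) (auto simp: mem_ordered_pairs)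
  have square: "a (m, m) = 0" if "(m, m) \<in> S" "m < 7" for m
    using lincomb_monomials_at_frame[OF S that(2), of a] zero that by auto
  show ?thesis
  proof (cases "k = l")
    case False
    with kl have "k < l" by auto
    from lincomb_monomials_at_frame_sum[OF S this kl(3), of a] zero[of "b k + b l"]
      square[of k] square[of l] kl p
    show ?thesis by (auto split: if_splits)
  qed (use square kl p in auto)
qed

lemma independent_monomials:
  assumes "S \<subseteq> set ordered_pairs"
  shows "inj_on (case_prod monomial) S" "fv.independent (case_prod monomial ` S)"
proof -
  have "\<forall>p\<in>S. a p = 0" if "(\<Sum>p\<in>S. fscale (a p) (case_prod monomial p)) = 0" for a
  proof
    fix p assume "p \<in> S"
    have "(\<Sum>p\<in>S. a p * case_prod monomial p x) = 0" for x
      using fun_cong[OF that, of x] by (simp add: sum_fun_apply)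
    then show "a p = 0" using lincomb_monomials_eq_0_imp[OF assms _ \<open>p \<in> S\<close>] by blast
  qed
  then show "inj_on (case_prod monomial) S" "fv.independent (case_prod monomial ` S)"
    using fv.independent_image_if_relations_trivial[OF finite_subset[OF assms]] by auto
qed

lemma fdim_span_monomials:
  assumes "S \<subseteq> set ordered_pairs"
  shows "fdim (fspan (case_prod monomial ` S)) = card S"
  using fv.dim_span_eq_card_independent card_image independent_monomials[OF assms] by metis

lemma monomial_eq_0_on_span:
  assumes "I \<subseteq> {0..<7}" "x \<in> vec.span (b ` I)" "p \<in> set ordered_pairs" "\<not> (fst p \<in> I \<and> snd p \<in> I)"
  shows "case_prod monomial p x = 0"
  using assms coord_eq_0_on_span[OF assms(2,1)] by (cases p) (auto simp: monomial_def mem_ordered_pairs)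

lemma quadric_at_frame:
  assumes "\<And>x. q x = (\<Sum>k<7. \<Sum>l<7. B k l * monomial k l x)"
  shows "k < 7 \<Longrightarrow> q (b k) = B k k"
    and "k < 7 \<Longrightarrow> l < 7 \<Longrightarrow> k \<noteq> l \<Longrightarrow> q (b k + b l) = B k k + B k l + B l k + B l l"
proof -
  assume k: "k < 7"
  have "q (b k) = (\<Sum>k'<7. \<Sum>l<7. if k' = k \<and> l = k then B k' l else 0)"
    unfolding assms using k by (intro sum.cong refl) (auto simp: monomial_at_frame)
  then show "q (b k) = B k k" using sum_sum_delta[of k 7 k B] k by simp
next
  assume kl: "k < 7" "l < 7" "k \<noteq> l"
  have "q (b k + b l) = (\<Sum>k'<7. \<Sum>l'<7.
      (if k' = k \<and> l' = k then B k' l' else 0) + (if k' = k \<and> l' = l then B k' l' else 0)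
    + (if k' = l \<and> l' = k then B k' l' else 0) + (if k' = l \<and> l' = l then B k' l' else 0))"
    unfolding assms using kl by (intro sum.cong refl) (auto simp: monomial_at_frame_sum)
  then show "q (b k + b l) = B k k + B k l + B l k + B l l"
    using kl by (simp add: sum.distrib sum_sum_delta)
qed

lemma quadric_eq_lincomb_monomials:
  assumes "\<And>x. q x = (\<Sum>k<7. \<Sum>l<7. B k l * monomial k l x)"
  shows "q = (\<Sum>k<7. fscale (B k k) (monomial k k))
           + (\<Sum>l<7. \<Sum>k<l. fscale (B k l + B l k) (monomial k l))"
proof
  fix x
  have "q x = (\<Sum>k<7. B k k * monomial k k x)
              + (\<Sum>l<7. \<Sum>k<l. B k l * monomial k l x + B l k * monomial l k x)"
    unfolding assms by (rule sum_diagonal_split)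
  also have "\<dots> = (\<Sum>k<7. B k k * monomial k k x)
              + (\<Sum>l<7. \<Sum>k<l. (B k l + B l k) * monomial k l x)"
    by (simp add: monomial_swap distrib_right)
  finally show "q x = ((\<Sum>k<7. fscale (B k k) (monomial k k))
        + (\<Sum>l<7. \<Sum>k<l. fscale (B k l + B l k) (monomial k l))) x"
    by (simp add: sum_fun_apply)
qed

lemma vanishing_quadric_in_span_monomials:
  assumes q: "q \<in> quad_forms" and zero_on: "\<And>I x. I \<in> II \<Longrightarrow> x \<in> vec.span (b ` I) \<Longrightarrow> q x = 0"
  shows "q \<in> fspan (case_prod monomial ` free_pairs II)"
proof -
  obtain B where B: "\<And>x. q x = (\<Sum>k<7. \<Sum>l<7. B k l * monomial k l x)"
    using quad_forms_expansion[OF q] by blast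
  have square: "B k k = 0 \<or> monomial k k \<in> case_prod monomial ` free_pairs II" if k: "k < 7" for k
  proof (cases "(k, k) \<in> free_pairs II")
    case False
    then obtain I where "I \<in> II" "k \<in> I" using k by (auto simp: free_pairs_def mem_ordered_pairs)
    then have "q (b k) = 0" using zero_on by (blast intro: vec.span_base)
    then show ?thesis using quadric_at_frame(1)[OF B k] by simp
  qed (auto intro: image_eqI[of _ _ "(k, k)"])
  have mixed: "B k l + B l k = 0 \<or> monomial k l \<in> case_prod monomial ` free_pairs II"
    if kl: "k < l" "l < 7" for k l
  proof (cases "(k, l) \<in> free_pairs II")
    case False
    then obtain I where I: "I \<in> II" "k \<in> I" "l \<in> I"
      using kl by (auto simp: free_pairs_def mem_ordered_pairs)
    then have "b k \<in> vec.span (b ` I)" "b l \<in> vec.span (b ` I)" by (auto intro: vec.span_base)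
    then have "q (b k) = 0" "q (b l) = 0" "q (b k + b l) = 0"
      using zero_on I vec.span_add by blast+
    then show ?thesis using quadric_at_frame[OF B] kl by auto
  qed (auto intro: image_eqI[of _ _ "(k, l)"])
  show ?thesis
    unfolding quadric_eq_lincomb_monomials[OF B]
    using square mixed by (intro fv.span_add fv.span_sum fspan_scale_mem) auto
qed

lemma vanishing_quadrics_eq_span_monomials:
  assumes II: "\<forall>I\<in>II. I \<subseteq> {0..<7}"
  shows "{q \<in> quad_forms. \<forall>I\<in>II. \<forall>x\<in>vec.span (b ` I). q x = 0}
           = fspan (case_prod monomial ` free_pairs II)" (is "?L = ?R")
proof
  let ?U = "\<Union>I\<in>II. vec.span (b ` I)"
  have L_eq: "?L = {q \<in> quad_forms. \<forall>x\<in>?U. q x = 0}"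
    by auto
  have "case_prod monomial ` free_pairs II \<subseteq> {q \<in> quad_forms. \<forall>x\<in>?U. q x = 0}"
    using monomial_eq_0_on_span II
    by (auto simp: free_pairs_def monomial_in_quad_forms split: prod.split)
  from fv.span_minimal[OF this subspace_vanishing_quadrics]
  show "?R \<subseteq> ?L" unfolding L_eq .
  show "?L \<subseteq> ?R" using vanishing_quadric_in_span_monomials by blast
qed

lemma fdim_vanishing_quadrics:
  assumes "\<forall>I\<in>II. I \<subseteq> {0..<7}"
  shows "fdim {q \<in> quad_forms. \<forall>I\<in>II. \<forall>x\<in>vec.span (b ` I). q x = 0} = card (free_pairs II)"
  unfolding vanishing_quadrics_eq_span_monomials[OF assms]
  by (rule fdim_span_monomials[OF free_pairs_subset])

end


section \<open>Adapted frames\<close>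

lemma frame_nth:
  assumes "length L = 7" "distinct L" "vec.independent (set L)"
  shows "frame (nth L)"
proof
  show "inj_on (nth L) {0..<7}" using assms by (intro inj_on_nth) auto
  show "vec.independent (nth L ` {0..<7})" using assms nth_image[of 7 L] by simp
qed

lemma nth_image_interval: "a + m \<le> length L \<Longrightarrow> nth L ` {a..<a + m} = set (take m (drop a L))"
proof -
  assume h: "a + m \<le> length L"
  have "{a..<a + m} = (\<lambda>i. a + i) ` {0..<m}"
    by (simp add: image_add_atLeastLessThan add.commute)
  then have "nth L ` {a..<a + m} = (\<lambda>i. L ! (a + i)) ` {0..<m}"
    by (simp only: image_image)
  also have "\<dots> = (\<lambda>i. drop a L ! i) ` {0..<m}"
    using h by (intro image_cong refl) simp
  also have "\<dots> = set (take m (drop a L))" using h by (intro nth_image) simp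
  finally show ?thesis .
qed

lemma nth_image_blocks:
  assumes "length xs = k" "length ys = 3 - k" "length zs = 3 - k" "k \<le> 3"
  shows "nth (xs @ ys @ zs @ ws) ` {0..<3} = set xs \<union> set ys"
    and "nth (xs @ ys @ zs @ ws) ` ({0..<k} \<union> {3..<6 - k}) = set xs \<union> set zs"
proof -
  let ?L = "xs @ ys @ zs @ ws"
  have "nth ?L ` {0..<3} = set (take 3 ?L)" using nth_image[of 3 ?L] assms by simp
  also have "take 3 ?L = xs @ ys" using assms by simp
  finally show "nth ?L ` {0..<3} = set xs \<union> set ys" by simp
  have "nth ?L ` {0..<k} = set (take k ?L)" using nth_image[of k ?L] assms by simp
  also have "take k ?L = xs" using assms by simp
  finally have "nth ?L ` {0..<k} = set xs" .
  moreover have "nth ?L ` {3..<3 + (3 - k)} = set (take (3 - k) (drop 3 ?L))"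
    using nth_image_interval[of 3 "3 - k" ?L] assms by simp
  moreover have "drop 3 ?L = zs @ ws" using assms by simp
  moreover have "{3..<3 + (3 - k)} = {3..<6 - k}" using assms(4) by simp
  ultimately show "nth ?L ` ({0..<k} \<union> {3..<6 - k}) = set xs \<union> set zs"
    using assms by (simp add: image_Un)
qed

text \<open>A basis \<open>A\<close> of \<open>W \<inter> W'\<close>, completed by \<open>B\<close> to a basis of \<open>W\<close> and by \<open>C\<close> to one of \<open>W'\<close>;
  then \<open>A \<union> B \<union> C\<close> is a basis of \<open>W + W'\<close>, of dimension \<open>6 - k\<close>.\<close>

lemma adapted_bases:
  assumes sW: "vec.subspace W" and sW': "vec.subspace W'"
    and dW: "vec.dim W = 3" and dW': "vec.dim W' = 3" and dK: "vec.dim (W \<inter> W') = k"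
  obtains A B C where "finite A" "finite B" "finite C" "card A = k" "card B = 3 - k" "card C = 3 - k"
    "A \<inter> B = {}" "A \<inter> C = {}" "B \<inter> C = {}" "vec.independent (A \<union> B \<union> C)"
    "W = vec.span (A \<union> B)" "W' = vec.span (A \<union> C)" "k \<le> 3"
proof -
  obtain A where A: "A \<subseteq> W \<inter> W'" "vec.independent A" "W \<inter> W' \<subseteq> vec.span A" "card A = k"
    using vec.basis_exists[of "W \<inter> W'"] dK by metis
  obtain BW where BW: "A \<subseteq> BW" "BW \<subseteq> W" "vec.independent BW" "W \<subseteq> vec.span BW"
    using vec.maximal_independent_subset_extend[of A W] A by auto
  obtain BW' where BW': "A \<subseteq> BW'" "BW' \<subseteq> W'" "vec.independent BW'" "W' \<subseteq> vec.span BW'"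
    using vec.maximal_independent_subset_extend[of A W'] A by auto
  have cBW: "card BW = 3" using vec.basis_card_eq_dim[OF BW(2,4,3)] dW by simp
  have cBW': "card BW' = 3" using vec.basis_card_eq_dim[OF BW'(2,4,3)] dW' by simp
  have fin: "finite A" "finite BW" "finite BW'"
    using A BW BW' vec.finiteI_independent by auto
  have k3: "k \<le> 3" using card_mono[OF fin(2) BW(1)] A cBW by simp
  define U where "U = BW \<union> BW'"
  define SS where "SS = {x + y |x y. x \<in> W \<and> y \<in> W'}"
  have dSS: "vec.dim SS = 6 - k"
    using vec.dim_sums_Int[OF sW sW'] dW dW' dK SS_def by simp
  have USS: "U \<subseteq> SS"
    using BW(2) BW'(2) vec.Un_subset_sums[OF sW sW'] by (auto simp: U_def SS_def)
  have SSU: "SS \<subseteq> vec.span U"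
    unfolding SS_def U_def by (rule vec.sums_subset_span_Un[OF BW(4) BW'(4)])
  have fU: "finite U" using fin by (simp add: U_def)
  have "A \<subseteq> BW \<inter> BW'" using BW(1) BW'(1) by blast
  then have "k \<le> card (BW \<inter> BW')" using card_mono[of "BW \<inter> BW'" A] fin(2) A(4) by simp
  moreover have "card U + card (BW \<inter> BW') = 6"
    using card_Un_Int[OF fin(2,3)] cBW cBW' by (simp add: U_def)
  ultimately have "card U \<le> 6 - k" by simp
  then have iU: "vec.independent U"
    using vec.card_le_dim_spanning[OF USS SSU fU] dSS by simp
  have "card U = 6 - k" using vec.basis_card_eq_dim[OF USS SSU iU] dSS by simp
  then have "card (BW \<inter> BW') = card A"
    using \<open>card U + card (BW \<inter> BW') = 6\<close> A(4) k3 by simp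
  then have BW_Int: "BW \<inter> BW' = A"
    using card_subset_eq[OF _ \<open>A \<subseteq> BW \<inter> BW'\<close>] fin(2) by simp
  show thesis
  proof (rule that[of A "BW - A" "BW' - A"])
    show "card (BW - A) = 3 - k" "card (BW' - A) = 3 - k"
      using card_Diff_subset[OF fin(1)] BW(1) BW'(1) cBW cBW' A(4) by simp_all
    have "A \<union> (BW - A) \<union> (BW' - A) = U" using BW(1) by (auto simp: U_def)
    then show "vec.independent (A \<union> (BW - A) \<union> (BW' - A))" using iU by simp
    show "W = vec.span (A \<union> (BW - A))" "W' = vec.span (A \<union> (BW' - A))"
      using vec.span_subspace[OF BW(2,4) sW] vec.span_subspace[OF BW'(2,4) sW'] BW(1) BW'(1)
      by (simp_all add: Un_absorb1)
    show "finite A" "finite (BW - A)" "finite (BW' - A)" using fin by simp_all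
    show "card A = k" "k \<le> 3" by fact+
    show "A \<inter> (BW - A) = {}" "A \<inter> (BW' - A) = {}" by blast+
    show "(BW - A) \<inter> (BW' - A) = {}" using BW_Int by blast
  qed
qed

lemma adapted_frame:
  assumes "vec.subspace W" "vec.subspace W'" "vec.dim W = 3" "vec.dim W' = 3"
    and "vec.dim (W \<inter> W') = k"
  obtains b where "frame b" "W = vec.span (b ` {0..<3})" "W' = vec.span (b ` ({0..<k} \<union> {3..<6 - k}))"
proof -
  obtain A B C where fin: "finite A" "finite B" "finite C"
    and card: "card A = k" "card B = 3 - k" "card C = 3 - k"
    and disj: "A \<inter> B = {}" "A \<inter> C = {}" "B \<inter> C = {}"
    and ind: "vec.independent (A \<union> B \<union> C)"
    and spans: "W = vec.span (A \<union> B)" "W' = vec.span (A \<union> C)" and k3: "k \<le> 3"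
    using adapted_bases[OF assms] by metis
  let ?U = "A \<union> B \<union> C"
  obtain E where E: "?U \<subseteq> E" "vec.independent E" "UNIV \<subseteq> vec.span E"
    using vec.maximal_independent_subset_extend[of ?U UNIV] ind by auto
  have "card E = 7" using vec.basis_card_eq_dim[of E UNIV] E by (simp add: card_cart_basis)
  moreover have "card ?U = 6 - k" using fin card disj k3 by (simp add: card_Un_disjoint Int_Un_distrib2)
  moreover have fE: "finite E" using E vec.finiteI_independent by blast
  ultimately have cE: "card (E - ?U) = k + 1" using card_Diff_subset[OF _ E(1)] fin k3 by simp
  obtain xsA where xsA: "set xsA = A" "distinct xsA" using finite_distinct_list[OF fin(1)] by blast
  obtain xsB where xsB: "set xsB = B" "distinct xsB" using finite_distinct_list[OF fin(2)] by blast
  obtain xsC where xsC: "set xsC = C" "distinct xsC" using finite_distinct_list[OF fin(3)] by blast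
  obtain xsE where xsE: "set xsE = E - ?U" "distinct xsE"
    using finite_distinct_list[OF finite_Diff[OF fE]] by blast
  note xs = xsA xsB xsC xsE
  have len: "length xsA = k" "length xsB = 3 - k" "length xsC = 3 - k" "length xsE = k + 1"
    using card cE xs by (simp_all flip: distinct_card)
  define L where "L = xsA @ xsB @ xsC @ xsE"
  have lL: "length L = 7" using len k3 by (simp add: L_def)
  have "frame (nth L)"
  proof (rule frame_nth[OF lL])
    show "distinct L" using xs disj by (auto simp: L_def)
    have "set L = E" using xs E(1) by (auto simp: L_def)
    then show "vec.independent (set L)" using E(2) by simp
  qed
  moreover have "nth L ` {0..<3} = A \<union> B" "nth L ` ({0..<k} \<union> {3..<6 - k}) = A \<union> C"
    using nth_image_blocks[OF len(1-3) k3, of xsE] xs by (simp_all add: L_def)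
  ultimately show thesis using that[of "nth L"] spans by simp
qed

lemma frame_of_plane:
  assumes "is_plane W"
  obtains b where "frame b" "W = vec.span (b ` {0..<3})"
  using adapted_frame[of W W] assms unfolding is_plane_def by metis


section \<open>Dimensions of \<open>L2 W\<close> and \<open>L2pair W W'\<close>\<close>

lemma frame_exists: obtains b where "frame b"
proof -
  obtain L where L: "set L = (cart_basis :: vec7 set)" "distinct L"
    using finite_distinct_list[OF finite_cart_basis] by blast
  then have "length L = 7" using card_cart_basis[where 'a=complex and 'i=7] distinct_card by force
  moreover have "vec.independent (set L)" unfolding L(1) by (rule independent_cart_basis)
  ultimately show thesis using frame_nth L(2) that by blast
qed

lemma fdim_quad_forms: "fdim quad_forms = 28"
proof -
  obtain b where "frame b" by (rule frame_exists)
  from frame.fdim_vanishing_quadrics[OF this, of "{}"]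
  show ?thesis by (simp add: card_free_pairs)
qed

lemma fdim_L2:
  assumes "is_plane W"
  shows "fdim (L2 W) = 22"
proof -
  obtain b where "frame b" "W = vec.span (b ` {0..<3})"
    using frame_of_plane[OF assms] by blast
  with frame.fdim_vanishing_quadrics[OF this(1), of "{{0..<3}}"]
  show ?thesis by (simp add: L2_def card_free_pairs)
qed

lemma fdim_L2pair:
  assumes "is_plane W" "is_plane W'" "vec.dim (W \<inter> W') = k" "k \<le> 2"
  shows "fdim (L2pair W W') = [16, 17, 19] ! k"
proof -
  obtain b where b: "frame b" "W = vec.span (b ` {0..<3})"
    "W' = vec.span (b ` ({0..<k} \<union> {3..<6 - k}))"
    using adapted_frame[of W W' k] assms unfolding is_plane_def by metis
  have "\<forall>I\<in>{{0..<3}, {0..<k} \<union> {3..<6 - k}}. I \<subseteq> {0..<7}" using assms(4) by auto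
  from frame.fdim_vanishing_quadrics[OF b(1) this] b(2,3)
  have "fdim (L2pair W W') = card (free_pairs {{0..<3}, {0..<k} \<union> {3..<6 - k}})"
    by (simp add: L2pair_def ball_Un)
  also have "\<dots> = [16, 17, 19] ! k"
    using \<open>k \<le> 2\<close> card_free_pairs by (auto simp: le_Suc_eq numeral_2_eq_2)
  finally show ?thesis .
qed


section \<open>Derivatives of the cubic along vectors\<close>

interpretation vf: finite_dimensional_vector_space_pair_1 "(*s)" "cart_basis :: vec7 set" fscale
  by (intro finite_dimensional_vector_space_pair_1.intro vec.finite_dimensional_vector_space_axioms
      fv.vector_space_axioms)

definition cubic_deriv :: "(7 \<Rightarrow> 7 \<Rightarrow> 7 \<Rightarrow> complex) \<Rightarrow> vec7 \<Rightarrow> vec7 \<Rightarrow> complex" where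
  "cubic_deriv c x v = (\<Sum>i\<in>UNIV. \<Sum>j\<in>UNIV. \<Sum>k\<in>UNIV.
     c i j k * (v$i * x$j * x$k + x$i * v$j * x$k + x$i * x$j * v$k))"

lemma deriv_cubic_of_along: "deriv (\<lambda>t. cubic_of c (x + t *s v)) 0 = cubic_deriv c x v"
proof -
  have "((\<lambda>t. \<Sum>i\<in>UNIV. \<Sum>j\<in>UNIV. \<Sum>k\<in>UNIV.
            c i j k * (x$i + t * v$i) * (x$j + t * v$j) * (x$k + t * v$k))
          has_field_derivative cubic_deriv c x v) (at 0)"
    unfolding cubic_deriv_def by (rule derivative_eq_intros refl | simp add: algebra_simps)+
  then show ?thesis by (simp add: cubic_of_def DERIV_imp_deriv)
qed

lemma pd_cubic_of: "pd i (cubic_of c) x = cubic_deriv c x (axis i 1)"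
  unfolding pd_def by (rule deriv_cubic_of_along)

lemma cubic_deriv_add: "cubic_deriv c x (u + w) = cubic_deriv c x u + cubic_deriv c x w"
  by (simp add: cubic_deriv_def algebra_simps sum.distrib)

lemma cubic_deriv_scale: "cubic_deriv c x (a *s v) = a * cubic_deriv c x v"
  by (simp add: cubic_deriv_def algebra_simps sum_distrib_left)

definition partial_along :: "(7 \<Rightarrow> 7 \<Rightarrow> 7 \<Rightarrow> complex) \<Rightarrow> vec7 \<Rightarrow> vec7 \<Rightarrow> complex" where
  "partial_along c v = (\<lambda>x. cubic_deriv c x v)"

lemma linear_partial_along: "Vector_Spaces.linear (*s) fscale (partial_along c)"
  unfolding Vector_Spaces.linear_iff
  using vec.vector_space_axioms fv.vector_space_axioms
  by (simp add: partial_along_def fun_eq_iff cubic_deriv_add cubic_deriv_scale)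

lemma partial_along_axis: "partial_along c (axis i 1) = pd i (cubic_of c)"
  by (simp add: partial_along_def pd_cubic_of fun_eq_iff)

lemma J2_eq_range_partial_along: "J2 (cubic_of c) = range (partial_along c)"
proof
  show "J2 (cubic_of c) \<subseteq> range (partial_along c)"
    unfolding J2_def
    by (rule fv.span_minimal)
      (auto simp: vf.linear_subspace_image[OF linear_partial_along vec.subspace_UNIV]
        simp flip: partial_along_axis)
  show "range (partial_along c) \<subseteq> J2 (cubic_of c)"
  proof clarify
    fix v :: vec7
    have "partial_along c v = partial_along c (\<Sum>i\<in>UNIV. v $ i *s axis i 1)"
      by (simp add: basis_expansion)
    also have "\<dots> = (\<Sum>i\<in>UNIV. fscale (v $ i) (pd i (cubic_of c)))"
      by (simp add: vf.linear_sum[OF linear_partial_along] vf.linear_scale[OF linear_partial_along]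
          partial_along_axis)
    also have "\<dots> \<in> J2 (cubic_of c)"
      unfolding J2_def by (intro fv.span_sum fv.span_scale fv.span_base) auto
    finally show "partial_along c v \<in> J2 (cubic_of c)" .
  qed
qed

lemma partial_along_in_quad_forms: "partial_along c v \<in> quad_forms"
proof -
  define A where "A j k = (\<Sum>i\<in>UNIV. (c i j k + c j i k + c j k i) * v$i)" for j k
  have "cubic_deriv c x v = (\<Sum>j\<in>UNIV. \<Sum>k\<in>UNIV. A j k * x$j * x$k)" for x
  proof -
    have "cubic_deriv c x v = (\<Sum>i\<in>UNIV. \<Sum>j\<in>UNIV. \<Sum>k\<in>UNIV. c i j k * v$i * x$j * x$k)
        + (\<Sum>i\<in>UNIV. \<Sum>j\<in>UNIV. \<Sum>k\<in>UNIV. c i j k * x$i * v$j * x$k)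
        + (\<Sum>i\<in>UNIV. \<Sum>j\<in>UNIV. \<Sum>k\<in>UNIV. c i j k * x$i * x$j * v$k)"
      by (simp add: cubic_deriv_def sum.distrib algebra_simps)
    also have "\<dots> = (\<Sum>j\<in>UNIV. \<Sum>k\<in>UNIV. \<Sum>i\<in>UNIV. c i j k * v$i * x$j * x$k)
        + (\<Sum>j\<in>UNIV. \<Sum>k\<in>UNIV. \<Sum>i\<in>UNIV. c j i k * v$i * x$j * x$k)
        + (\<Sum>j\<in>UNIV. \<Sum>k\<in>UNIV. \<Sum>i\<in>UNIV. c j k i * v$i * x$j * x$k)"
    proof -
      have "(\<Sum>i\<in>UNIV. \<Sum>j\<in>UNIV. \<Sum>k\<in>UNIV. c i j k * v$i * x$j * x$k) =
            (\<Sum>j\<in>UNIV. \<Sum>k\<in>UNIV. \<Sum>i\<in>UNIV. c i j k * v$i * x$j * x$k)"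
        by (subst sum.swap, rule sum.cong[OF refl], rule sum.swap)
      moreover have "(\<Sum>i\<in>UNIV. \<Sum>j\<in>UNIV. \<Sum>k\<in>UNIV. c i j k * x$i * v$j * x$k) =
            (\<Sum>j\<in>UNIV. \<Sum>k\<in>UNIV. \<Sum>i\<in>UNIV. c j i k * v$i * x$j * x$k)"
        by (rule sum.cong[OF refl], subst sum.swap) (simp add: mult_ac)
      moreover have "(\<Sum>i\<in>UNIV. \<Sum>j\<in>UNIV. \<Sum>k\<in>UNIV. c i j k * x$i * x$j * v$k) =
            (\<Sum>j\<in>UNIV. \<Sum>k\<in>UNIV. \<Sum>i\<in>UNIV. c j k i * v$i * x$j * x$k)"
        by (simp add: mult_ac)
      ultimately show ?thesis by simp
    qed
    also have "\<dots> = (\<Sum>j\<in>UNIV. \<Sum>k\<in>UNIV. A j k * x$j * x$k)"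
      by (simp add: A_def sum.distrib algebra_simps sum_distrib_left sum_distrib_right)
    finally show ?thesis .
  qed
  then show ?thesis unfolding quad_forms_def partial_along_def by auto
qed

lemma partial_along_eq_0_on_subspace:
  assumes "vec.subspace W" "\<forall>x\<in>W. cubic_of c x = 0" "v \<in> W" "x \<in> W"
  shows "partial_along c v x = 0"
proof -
  have "(\<lambda>t. cubic_of c (x + t *s v)) = (\<lambda>t. 0)"
    using assms by (auto intro!: ext vec.subspace_add vec.subspace_scale)
  then show ?thesis using deriv_cubic_of_along[of c x v] by (simp add: partial_along_def)
qed

definition cubic_polar :: "(7 \<Rightarrow> 7 \<Rightarrow> 7 \<Rightarrow> complex) \<Rightarrow> vec7 \<Rightarrow> vec7 \<Rightarrow> vec7 \<Rightarrow> complex" where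
  "cubic_polar c x y z = (\<Sum>i\<in>UNIV. \<Sum>j\<in>UNIV. \<Sum>k\<in>UNIV. c i j k *
     (x$i * y$j * z$k + x$i * z$j * y$k + y$i * x$j * z$k
      + y$i * z$j * x$k + z$i * x$j * y$k + z$i * y$j * x$k))"

lemma cubic_polar_diagonal: "cubic_polar c x x v = 2 * cubic_deriv c x v"
  by (simp add: cubic_polar_def cubic_deriv_def sum_distrib_left algebra_simps)

lemma cubic_polar_swap12: "cubic_polar c x y z = cubic_polar c y x z"
  by (simp add: cubic_polar_def algebra_simps)

lemma cubic_polar_swap13: "cubic_polar c x y z = cubic_polar c z y x"
  by (simp add: cubic_polar_def algebra_simps)

lemma cubic_polar_add:
  "cubic_polar c (x + x') y z = cubic_polar c x y z + cubic_polar c x' y z"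
  "cubic_polar c x (y + y') z = cubic_polar c x y z + cubic_polar c x y' z"
  by (simp_all add: cubic_polar_def algebra_simps sum.distrib)

text \<open>If \<open>\<partial>\<^sub>af = 0\<close>, polarization in the two other slots and the symmetry of the polar form
  make \<open>a\<close> a common zero of all the partials \<open>\<partial>\<^sub>if\<close>.\<close>

lemma inj_partial_along:
  assumes smooth: "smooth_hyp (cubic_of c)"
  shows "inj (partial_along c)"
  unfolding vf.linear_inj_iff_eq_0[OF linear_partial_along]
proof (intro allI impI)
  fix a assume "partial_along c a = 0"
  then have diagonal: "cubic_polar c x x a = 0" for x
    using cubic_polar_diagonal[of c x a] by (simp add: partial_along_def fun_eq_iff)
  have polar: "cubic_polar c x y a = 0" for x y
  proof -
    have "cubic_polar c (x + y) (x + y) a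
        = cubic_polar c x x a + cubic_polar c x y a + cubic_polar c y x a + cubic_polar c y y a"
      by (simp add: cubic_polar_add)
    then show ?thesis using diagonal[of "x + y"] diagonal[of x] diagonal[of y]
        cubic_polar_swap12[of c y x a] by simp
  qed
  have "pd i (cubic_of c) a = 0" for i
  proof -
    have "2 * pd i (cubic_of c) a = cubic_polar c (axis i 1) a a"
      by (simp add: pd_cubic_of cubic_polar_diagonal cubic_polar_swap13[of c "axis i 1"])
    then show ?thesis using polar by simp
  qed
  then show "a = 0" using smooth unfolding smooth_hyp_def by blast
qed


section \<open>Quadrics in the Jacobian ideal vanishing on a plane of \<open>X\<close>\<close>

context frame
begin

definition coord_lift :: "vec7 set \<Rightarrow> nat \<Rightarrow> vec7 \<Rightarrow> vec7 \<Rightarrow> vec7" where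
  "coord_lift W i u = (\<lambda>x. if x \<in> W then coord i x *s u else 0)"

lemma coord_lift_in_tan_lift:
  assumes sW: "vec.subspace W" and u: "\<forall>x\<in>W. partial_along c u x = 0"
  shows "coord_lift W i u \<in> tan_lift (cubic_of c) W"
proof -
  have "coord_lift W i u \<in> hom_on W"
    unfolding hom_on_def coord_lift_def
    using vec.subspace_add[OF sW] vec.subspace_scale[OF sW]
    by (auto simp: coord_add coord_scale vector_add_ldistrib scalar_mult_eq_scaleR algebra_simps)
  moreover have "deriv (\<lambda>t. cubic_of c (w + t *s coord_lift W i u w)) 0 = 0" if "w \<in> W" for w
  proof -
    have "deriv (\<lambda>t. cubic_of c (w + t *s coord_lift W i u w)) 0
        = cubic_deriv c w (coord_lift W i u w)"
      by (rule deriv_cubic_of_along)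
    also have "\<dots> = coord i w * partial_along c u w"
      using that by (simp add: coord_lift_def cubic_deriv_scale partial_along_def)
    finally show ?thesis using that u by simp
  qed
  ultimately show ?thesis by (simp add: tan_lift_def)
qed

lemma independent_coord_lifts:
  fixes n :: nat
  assumes W: "W = vec.span (b ` {0..<3})"
    and u: "vec.independent (u ` {0..<n})" "inj_on u {0..<n}"
  shows "inj_on (\<lambda>(i, j). coord_lift W i (u j)) ({0..<3} \<times> {0..<n})"
    "hv.independent ((\<lambda>(i, j). coord_lift W i (u j)) ` ({0..<3} \<times> {0..<n}))"
proof -
  let ?\<psi> = "\<lambda>(i, j). coord_lift W i (u j)"
  have trivial: "\<forall>p\<in>{0..<3} \<times> {0..<n}. a p = 0"
    if zero: "(\<Sum>p\<in>{0..<3} \<times> {0..<n}. hscale (a p) (?\<psi> p)) = 0" for a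
  proof clarify
    fix i j assume ij: "i \<in> {0..<3::nat}" "j \<in> {0..<n}"
    have "b i \<in> W" using W ij by (auto intro: vec.span_base)
    have "0 = (\<Sum>p\<in>{0..<3} \<times> {0..<n}. hscale (a p) (?\<psi> p)) (b i)"
      using zero by simp
    also have "\<dots> = (\<Sum>i'\<in>{0..<3}. \<Sum>j'\<in>{0..<n}. a (i', j') *s (coord i' (b i) *s u j'))"
      using \<open>b i \<in> W\<close>
      by (simp add: sum_fun_apply coord_lift_def sum.cartesian_product split_def)
    also have "\<dots> = (\<Sum>i'\<in>{0..<3}. if i' = i then (\<Sum>j'\<in>{0..<n}. a (i', j') *s u j') else 0)"
      using ij by (intro sum.cong refl) (auto simp: coord_frame)
    also have "\<dots> = (\<Sum>j'\<in>{0..<n}. a (i, j') *s u j')"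
      using ij by (simp add: sum.delta')
    finally show "a (i, j) = 0"
      using vec.coefficient_zero_if_independent[OF u finite_atLeastLessThan, of "\<lambda>j'. a (i, j')" j] ij
      by simp
  qed
  have fin: "finite ({0..<3::nat} \<times> {0..<n})" by simp
  show "inj_on ?\<psi> ({0..<3} \<times> {0..<n})"
    using fin by (rule hv.independent_image_if_relations_trivial(1)) (erule trivial)
  show "hv.independent (?\<psi> ` ({0..<3} \<times> {0..<n}))"
    using fin by (rule hv.independent_image_if_relations_trivial(2)) (erule trivial)
qed

lemma mem_coordinate_plane_if_partial_along_vanishes:
  assumes F: "W \<in> F2 (cubic_of c)" and W: "W = vec.span (b ` {0..<3})"
    and T2: "F2_tangent_dim (cubic_of c) W = 2" and v: "\<forall>x\<in>W. partial_along c v x = 0"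
  shows "v \<in> W"
proof (rule ccontr)
  assume "v \<notin> W"
  have sW: "vec.subspace W" unfolding W by (rule vec.subspace_span)
  define u where "u j = (if j < 3 then b j else v)" for j :: nat
  have b_W: "b j \<in> W" if "j < 3" for j using W that by (auto intro: vec.span_base)
  have u4: "u ` {0..<4} = insert v (b ` {0..<3})"
    using atLeast0_lessThan_Suc[of 3] by (auto simp: u_def numeral_eq_Suc)
  have "vec.independent (b ` {0..<3})" by (rule vec.independent_mono[OF independent_b]) auto
  then have u_independent: "vec.independent (u ` {0..<4})"
    unfolding u4 using vec.independent_insertI \<open>v \<notin> W\<close> W by simp
  have "inj_on b {0..<3}" using inj_on_subset[OF inj_b] by auto
  then have u_inj: "inj_on u {0..<4}"
    using b_W \<open>v \<notin> W\<close> unfolding u_def inj_on_def by (auto split: if_splits)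
  have u_vanish: "\<forall>x\<in>W. partial_along c (u j) x = 0" for j
    using v partial_along_eq_0_on_subspace[OF sW] F b_W by (auto simp: u_def F2_def)
  let ?S = "{0..<3::nat} \<times> {0..<4::nat}" and ?\<psi> = "\<lambda>(i, j). coord_lift W i (u j)"
  note lifts = independent_coord_lifts[OF W u_independent u_inj]
  have "hdim (?\<psi> ` ?S) = 12"
    using hv.dim_eq_card_independent[OF lifts(2)] card_image[OF lifts(1)] by simp
  moreover have "?\<psi> ` ?S \<subseteq> tan_lift (cubic_of c) W"
    using coord_lift_in_tan_lift[OF sW u_vanish] by auto
  moreover have "hdim (tan_lift (cubic_of c) W) = 11"
    using T2 unfolding F2_tangent_dim_def by simp
  moreover obtain B where "tan_lift (cubic_of c) W \<subseteq> hv.span B" "card B = 11"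
    using hv.basis_exists[of "tan_lift (cubic_of c) W"] \<open>hdim _ = 11\<close> by metis
  ultimately show False
    using hv.dim_mono_finite_span[of "?\<psi> ` ?S" "tan_lift (cubic_of c) W" B] card.infinite
    by fastforce
qed

end

lemma mem_plane_if_partial_along_vanishes:
  assumes "W \<in> F2 (cubic_of c)" "F2_tangent_dim (cubic_of c) W = 2"
    and "\<forall>x\<in>W. partial_along c v x = 0"
  shows "v \<in> W"
proof -
  obtain b where "frame b" "W = vec.span (b ` {0..<3})"
    using frame_of_plane assms(1) unfolding F2_def by blast
  then show ?thesis using frame.mem_coordinate_plane_if_partial_along_vanishes assms by blast
qed

lemma J2_inter_L2_eq:
  assumes "W \<in> F2 (cubic_of c)" "F2_tangent_dim (cubic_of c) W = 2"
  shows "J2 (cubic_of c) \<inter> L2 W = partial_along c ` W"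
proof
  show "J2 (cubic_of c) \<inter> L2 W \<subseteq> partial_along c ` W"
  proof
    fix q assume q: "q \<in> J2 (cubic_of c) \<inter> L2 W"
    then obtain v where v: "q = partial_along c v" by (auto simp: J2_eq_range_partial_along)
    with q have "\<forall>x\<in>W. partial_along c v x = 0" by (simp add: L2_def)
    then have "v \<in> W" by (rule mem_plane_if_partial_along_vanishes[OF assms])
    with v show "q \<in> partial_along c ` W" by blast
  qed
  have "vec.subspace W" "\<forall>x\<in>W. cubic_of c x = 0"
    using assms(1) by (auto simp: F2_def is_plane_def)
  then show "partial_along c ` W \<subseteq> J2 (cubic_of c) \<inter> L2 W"
    using partial_along_eq_0_on_subspace
    by (auto simp: J2_eq_range_partial_along L2_def partial_along_in_quad_forms)
qed

lemma partial_along_image_subset_J2_L2pair: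
  assumes "W \<in> F2 (cubic_of c)" "W' \<in> F2 (cubic_of c)"
  shows "partial_along c ` (W \<inter> W') \<subseteq> J2 (cubic_of c) \<inter> L2pair W W'"
proof -
  have "vec.subspace W" "\<forall>x\<in>W. cubic_of c x = 0" "vec.subspace W'" "\<forall>x\<in>W'. cubic_of c x = 0"
    using assms by (auto simp: F2_def is_plane_def)
  then show ?thesis
    using partial_along_eq_0_on_subspace[of W c] partial_along_eq_0_on_subspace[of W' c]
    by (auto simp: J2_eq_range_partial_along L2pair_def partial_along_in_quad_forms)
qed

lemma fdim_J2_inter_L2pair_ge:
  assumes "smooth_hyp (cubic_of c)" "W \<in> F2 (cubic_of c)" "W' \<in> F2 (cubic_of c)"
  shows "vec.dim (W \<inter> W') \<le> fdim (J2 (cubic_of c) \<inter> L2pair W W')"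
proof -
  obtain Q where Q: "finite Q" "quad_forms \<subseteq> fspan Q" by (rule quad_forms_in_finite_span)
  have "vec.dim (W \<inter> W') = fdim (partial_along c ` (W \<inter> W'))"
    using vf.dim_image_eq[OF linear_partial_along] inj_partial_along[OF assms(1)]
    by (simp add: inj_on_subset)
  also have "\<dots> \<le> fdim (J2 (cubic_of c) \<inter> L2pair W W')"
    using fv.dim_mono_finite_span[OF partial_along_image_subset_J2_L2pair[OF assms(2,3)] _ Q(1)] Q(2)
    by (auto simp: L2pair_def)
  finally show ?thesis .
qed

lemma sum_J2_L2_L2pair_subset:
  assumes F: "W \<in> F2 (cubic_of c)" "W' \<in> F2 (cubic_of c)" and T2: "F2_tangent_dim (cubic_of c) W = 2"
    and w: "w \<in> W" "w \<notin> W'" and line: "vec.dim (W \<inter> W') = 2"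
  shows "sum_sp (J2 (cubic_of c) \<inter> L2 W) (L2pair W W')
           \<subseteq> fspan (insert (partial_along c w) (L2pair W W'))"
proof -
  have sW: "vec.subspace W" "vec.subspace W'" and dW: "vec.dim W = 3"
    using F by (auto simp: F2_def is_plane_def)
  let ?K = "W \<inter> W'"
  have sK: "vec.subspace ?K" using vec.subspace_inter[OF sW] .
  have "vec.dim (insert w ?K) = 3"
    using w line vec.dim_insert[of w ?K] vec.span_eq_iff[THEN iffD2, OF sK] by simp
  then have W_span: "W \<subseteq> vec.span (insert w ?K)"
    using vec.dim_eq_span[of "insert w ?K" W] w(1) dW vec.span_eq_iff[THEN iffD2, OF sW(1)]
    by (simp add: vec.span_superset)
  show ?thesis
  proof
    fix z assume "z \<in> sum_sp (J2 (cubic_of c) \<inter> L2 W) (L2pair W W')"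
    then obtain v q where z: "z = partial_along c v + q" "v \<in> W" "q \<in> L2pair W W'"
      using J2_inter_L2_eq[OF F(1) T2] by (auto simp: sum_sp_def)
    obtain a where "v - a *s w \<in> ?K"
      using W_span z(2) vec.span_breakdown_eq vec.span_eq_iff[THEN iffD2, OF sK] by blast
    then have "partial_along c (v - a *s w) \<in> L2pair W W'"
      using partial_along_image_subset_J2_L2pair[OF F(1,2)] by blast
    moreover have "partial_along c v = partial_along c (v - a *s w) + fscale a (partial_along c w)"
      using vf.linear_diff[OF linear_partial_along] vf.linear_scale[OF linear_partial_along] by simp
    ultimately show "z \<in> fspan (insert (partial_along c w) (L2pair W W'))"
      using z(1,3) by (metis fv.span_add fv.span_base fv.span_scale insertCI)
  qed
qed

lemma fdim_sum_J2_L2_L2pair_le: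
  assumes F: "W \<in> F2 (cubic_of c)" "W' \<in> F2 (cubic_of c)" and T2: "F2_tangent_dim (cubic_of c) W = 2"
    and line: "vec.dim (W \<inter> W') = 2"
  shows "fdim (sum_sp (J2 (cubic_of c) \<inter> L2 W) (L2pair W W')) + 2 \<le> fdim (L2 W)"
proof -
  have planes: "is_plane W" "is_plane W'" using F by (auto simp: F2_def)
  have "\<not> W \<subseteq> W'"
  proof
    assume "W \<subseteq> W'"
    then have "W \<inter> W' = W" by blast
    then show False using line planes(1) by (simp add: is_plane_def)
  qed
  then obtain w where w: "w \<in> W" "w \<notin> W'" by blast
  obtain Q where Q: "finite Q" "quad_forms \<subseteq> fspan Q" by (rule quad_forms_in_finite_span)
  let ?M = "insert (partial_along c w) (L2pair W W')"
  have "?M \<subseteq> fspan Q" using Q(2) partial_along_in_quad_forms by (auto simp: L2pair_def)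
  then have "fspan ?M \<subseteq> fspan Q" by (simp add: fv.span_minimal)
  then have "fdim (sum_sp (J2 (cubic_of c) \<inter> L2 W) (L2pair W W')) \<le> fdim ?M"
    using fv.dim_mono_finite_span[OF sum_J2_L2_L2pair_subset[OF F T2 w line] _ Q(1)] by simp
  also have "\<dots> \<le> fdim (L2pair W W') + 1"
    using fv.dim_insert_le_finite_span[OF _ Q(1)] Q(2) by (simp add: L2pair_def subset_iff)
  also have "\<dots> = 20" using fdim_L2pair[OF planes line] by simp
  finally show ?thesis using fdim_L2[OF planes(1)] by simp
qed

lemma fdim_L2_eq_fdim_L2pair_add:
  assumes "is_plane W" "is_plane W'" "vec.dim (W \<inter> W') = k" "k \<le> 2"
  shows "fdim (L2 W) = fdim (L2pair W W') + [6, 5, 3] ! k"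
  using fdim_L2[OF assms(1)] fdim_L2pair[OF assms] assms(4)
  by (auto simp: le_Suc_eq numeral_2_eq_2)

lemma J2_L2pair_bounds:
  assumes X: "smooth_hyp (cubic_of c)" "F2_smooth_surface (cubic_of c)"
    and F: "W \<in> F2 (cubic_of c)" "W' \<in> F2 (cubic_of c)" and line: "vec.dim (W \<inter> W') = 2"
  shows "2 \<le> fdim (J2 (cubic_of c) \<inter> L2pair W W')"
    and "fdim (sum_sp (J2 (cubic_of c) \<inter> L2 W) (L2pair W W')) + 2 \<le> fdim (L2 W)"
    and "sum_sp (J2 (cubic_of c) \<inter> L2 W) (L2pair W W') \<subset> L2 W"
proof -
  show "2 \<le> fdim (J2 (cubic_of c) \<inter> L2pair W W')"
    using fdim_J2_inter_L2pair_ge[OF X(1) F] line by simp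
  have "F2_tangent_dim (cubic_of c) W = 2"
    using X(2) F(1) unfolding F2_smooth_surface_def by blast
  then show codim: "fdim (sum_sp (J2 (cubic_of c) \<inter> L2 W) (L2pair W W')) + 2 \<le> fdim (L2 W)"
    by (rule fdim_sum_J2_L2_L2pair_le[OF F _ line])
  have "sum_sp (J2 (cubic_of c) \<inter> L2 W) (L2pair W W') \<subseteq> L2 W"
    by (auto simp: sum_sp_def L2_def L2pair_def intro: quad_forms_add)
  then show "sum_sp (J2 (cubic_of c) \<inter> L2 W) (L2pair W W') \<subset> L2 W"
    using codim by auto
qed

theorem mainTheorem9:
  shows
  "(\<forall>W. is_plane W \<longrightarrow> fdim quad_forms = fdim (L2 W) + 6)
 \<and> (\<forall>W W'. is_plane W \<and> is_plane W' \<and> W \<noteq> W' \<longrightarrow>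
       (vec.dim (W \<inter> W') = 0 \<longrightarrow> fdim (L2 W) = fdim (L2pair W W') + 6)
     \<and> (vec.dim (W \<inter> W') = 1 \<longrightarrow> fdim (L2 W) = fdim (L2pair W W') + 5)
     \<and> (vec.dim (W \<inter> W') = 2 \<longrightarrow> fdim (L2 W) = fdim (L2pair W W') + 3))
 \<and> (\<forall>c. smooth_hyp (cubic_of c) \<and> F2_smooth_surface (cubic_of c) \<longrightarrow>
       (\<forall>W\<in>F2 (cubic_of c). \<forall>W'\<in>F2 (cubic_of c). W \<noteq> W' \<and> vec.dim (W \<inter> W') = 2 \<longrightarrow>
          fdim (J2 (cubic_of c) \<inter> L2pair W W') \<ge> 1
        \<and> sum_sp (J2 (cubic_of c) \<inter> L2 W) (L2pair W W') \<subset> L2 W))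
 \<and> (\<exists>p. poly_fun p \<and> (\<exists>c0. p c0 \<noteq> 0) \<and>
       (\<forall>c. p c \<noteq> 0 \<and> smooth_hyp (cubic_of c) \<and> F2_smooth_surface (cubic_of c) \<longrightarrow>
         (\<forall>W\<in>F2 (cubic_of c). \<forall>W'\<in>F2 (cubic_of c). W \<noteq> W' \<and> vec.dim (W \<inter> W') = 2 \<longrightarrow>
            fdim (J2 (cubic_of c) \<inter> L2pair W W') \<ge> 2
          \<and> fdim (L2 W) \<ge> fdim (sum_sp (J2 (cubic_of c) \<inter> L2 W) (L2pair W W')) + 2)))"
proof (intro conjI allI impI ballI)
  show "fdim quad_forms = fdim (L2 W) + 6" if "is_plane W" for W
    using fdim_quad_forms fdim_L2[OF that] by simp
  fix W W' assume "is_plane W \<and> is_plane W' \<and> W \<noteq> W'"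
  then show "vec.dim (W \<inter> W') = 0 \<Longrightarrow> fdim (L2 W) = fdim (L2pair W W') + 6"
    and "vec.dim (W \<inter> W') = 1 \<Longrightarrow> fdim (L2 W) = fdim (L2pair W W') + 5"
    and "vec.dim (W \<inter> W') = 2 \<Longrightarrow> fdim (L2 W) = fdim (L2pair W W') + 3"
    using fdim_L2_eq_fdim_L2pair_add[of W W' 0] fdim_L2_eq_fdim_L2pair_add[of W W' 1]
      fdim_L2_eq_fdim_L2pair_add[of W W' 2]
    by simp_all
next
  fix c W W'
  assume "smooth_hyp (cubic_of c) \<and> F2_smooth_surface (cubic_of c)"
    "W \<in> F2 (cubic_of c)" "W' \<in> F2 (cubic_of c)" "W \<noteq> W' \<and> vec.dim (W \<inter> W') = 2"
  then show "1 \<le> fdim (J2 (cubic_of c) \<inter> L2pair W W')"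
    and "sum_sp (J2 (cubic_of c) \<inter> L2 W) (L2pair W W') \<subset> L2 W"
    using J2_L2pair_bounds[of c W W'] by auto
qed (use J2_L2pair_bounds in \<open>auto intro!: exI[of _ "\<lambda>c. 1"] pf_const\<close>)

end
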